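(* Let $G=\operatorname{SL}(V)$ with $\dim V=n\ge2$. Every $G$-invariant alternating bilinear form on $V\otimes V^*$ is a scalar multiple of $b_V$.
   Context: $K$ is an algebraically closed field of characteristic 2. The form $b_V$ on $V\otimes V^*$ is defined by $b_V(v\otimes f,v'\otimes f')=f(v')f'(v)+f(v)f'(v')$ for $v,v'\in V$, $f,f'\in V^*$. *)

theory Defs
  imports "HOL-Analysis.Analysis" "HOL-Computational_Algebra.Polynomial"
begin

text \<open>V = K^n (type 'n indexes a basis), V* = K^n via the standard pairing.
  V \<otimes> V* is identified with n\<times>n matrices, v \<otimes> f corresponding to the matrix (v_i f_j).\<close>

definition pairing :: "'a::comm_ring_1^'n \<Rightarrow> 'a^'n \<Rightarrow> 'a" where
  "pairing f v = (\<Sum>i\<in>UNIV. f$i * v$i)"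

definition tensor :: "'a::comm_ring_1^'n \<Rightarrow> 'a^'n \<Rightarrow> 'a^'n^'n" where
  "tensor v f = (\<chi> i j. v$i * f$j)"

definition bV_pure :: "'a::comm_ring_1^'n \<Rightarrow> 'a^'n \<Rightarrow> 'a^'n \<Rightarrow> 'a^'n \<Rightarrow> 'a" where
  "bV_pure v f v' f' = pairing f v' * pairing f' v + pairing f v * pairing f' v'"

definition bV :: "'a::comm_ring_1^'n^'n \<Rightarrow> 'a^'n^'n \<Rightarrow> 'a" where
  "bV X Y = (\<Sum>i\<in>UNIV. \<Sum>j\<in>UNIV. \<Sum>k\<in>UNIV. \<Sum>l\<in>UNIV.
      X$i$j * Y$k$l * bV_pure (axis i 1) (axis j 1) (axis k 1) (axis l 1))"

definition smult_mat :: "'a::comm_ring_1 \<Rightarrow> 'a^'n^'n \<Rightarrow> 'a^'n^'n" where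
  "smult_mat c X = (\<chi> i j. c * X$i$j)"

definition bilinear_form :: "('a::comm_ring_1^'n^'n \<Rightarrow> 'a^'n^'n \<Rightarrow> 'a) \<Rightarrow> bool" where
  "bilinear_form B \<longleftrightarrow>
     (\<forall>X X' Y. B (X + X') Y = B X Y + B X' Y) \<and>
     (\<forall>X Y Y'. B X (Y + Y') = B X Y + B X Y') \<and>
     (\<forall>c X Y. B (smult_mat c X) Y = c * B X Y) \<and>
     (\<forall>c X Y. B X (smult_mat c Y) = c * B X Y)"

definition alternating :: "('a::comm_ring_1^'n^'n \<Rightarrow> 'a^'n^'n \<Rightarrow> 'a) \<Rightarrow> bool" where
  "alternating B \<longleftrightarrow> (\<forall>X. B X X = 0)"

text \<open>SL(V) acts on V \<otimes> V* by g\<cdot>(v \<otimes> f) = g v \<otimes> f \<circ> g\<inverse>, i.e. X \<mapsto> g X g\<inverse>.\<close>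
definition SL_invariant :: "('a::comm_ring_1^'n^'n \<Rightarrow> 'a^'n^'n \<Rightarrow> 'a) \<Rightarrow> bool" where
  "SL_invariant B \<longleftrightarrow>
     (\<forall>g h X Y. det g = 1 \<and> g ** h = mat 1 \<longrightarrow> B (g ** X ** h) (g ** Y ** h) = B X Y)"

end

theory Submission
  imports Defs "HOL-Computational_Algebra.Polynomial"
begin

text \<open>Write \<beta>(i,j,k,l) = B(E_ij, E_kl) for the matrix units E_ij. Conjugation by a diagonal
  matrix t of determinant 1 multiplies \<beta>(i,j,k,l) by t_i t_k / (t_j t_l). Taking the entries of t
  to be the powers of s given by a coroot, with s not a root of unity of order at most 4 (an
  algebraically closed field is infinite), shows that \<beta>(i,j,k,l) = 0 unless {i,k} = {j,l} as
  multisets. Conjugation by the transvections 1 + E_ab then gives \<beta>(b,a,a,b) = -\<beta>(a,a,b,b) and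
  \<beta>(a,a,b,b) = \<beta>(a,a,c,c) for distinct a, b, c. In characteristic 2 the signs disappear and
  antisymmetry becomes symmetry, so all \<beta>(a,a,b,b) with a \<noteq> b equal one constant c and \<beta> agrees
  with c b_V on matrix units; on the diagonal \<beta>(i,i,i,i) = 0 matches b_V(E_ii, E_ii) = 2 = 0.\<close>

section \<open>Matrix units and bilinear forms\<close>

definition matrix_unit :: "'n \<Rightarrow> 'n \<Rightarrow> 'a::comm_ring_1^'n^'n" where
  "matrix_unit i j = (\<chi> r s. if r = i \<and> s = j then 1 else 0)"

lemma matrix_unit_nth [simp]: "matrix_unit i j $ r $ s = (if r = i \<and> s = j then 1 else 0)"
  by (simp add: matrix_unit_def)

lemma matrix_mult_unit_mult_nth:
  "(A ** matrix_unit i j ** C) $ r $ s = A $ r $ i * C $ j $ s"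
proof -
  have "(A ** matrix_unit i j) $ r $ t * C $ t $ s = (if t = j then A $ r $ i * C $ t $ s else 0)" for t
    by (simp add: matrix_matrix_mult_def if_distrib cong: if_cong)
  then show ?thesis
    by (simp add: matrix_matrix_mult_def[of "A ** matrix_unit i j" C])
qed

lemma smult_mat_nth [simp]: "smult_mat c X $ i $ j = c * X $ i $ j"
  by (simp add: smult_mat_def)

lemma matrix_eq_sum_units: "X = (\<Sum>i\<in>UNIV. \<Sum>j\<in>UNIV. smult_mat (X $ i $ j) (matrix_unit i j))"
proof -
  have "(\<Sum>i\<in>UNIV. \<Sum>j\<in>UNIV. X $ i $ j * (if r = i \<and> s = j then 1 else 0)) = X $ r $ s" for r s
  proof -
    have "(\<Sum>j\<in>UNIV. X $ i $ j * (if r = i \<and> s = j then 1 else 0)) = (if r = i then X $ i $ s else 0)" for i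
      by (simp add: if_distrib cong: if_cong)
    then show ?thesis by simp
  qed
  then show ?thesis by (simp add: vec_eq_iff sum_component)
qed

context
  fixes B :: "'a::comm_ring_1^'n^'n \<Rightarrow> 'a^'n^'n \<Rightarrow> 'a"
  assumes bil: "bilinear_form B"
begin

lemma bilinear_form_add_left: "B (X + X') Y = B X Y + B X' Y"
  using bil by (simp add: bilinear_form_def)

lemma bilinear_form_add_right: "B X (Y + Y') = B X Y + B X Y'"
  using bil by (simp add: bilinear_form_def)

lemma bilinear_form_smult_left: "B (smult_mat c X) Y = c * B X Y"
  using bil by (simp add: bilinear_form_def)

lemma bilinear_form_smult_right: "B X (smult_mat c Y) = c * B X Y"
  using bil by (simp add: bilinear_form_def)

lemma bilinear_form_diff_left: "B (X - X') Y = B X Y - B X' Y"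
  using bilinear_form_add_left[of "X - X'" X' Y] by (simp add: algebra_simps)

lemma bilinear_form_diff_right: "B X (Y - Y') = B X Y - B X Y'"
  using bilinear_form_add_right[of X "Y - Y'" Y'] by (simp add: algebra_simps)

lemma bilinear_form_zero_left: "B 0 Y = 0"
  using bilinear_form_add_left[of 0 0 Y] by simp

lemma bilinear_form_zero_right: "B X 0 = 0"
  using bilinear_form_add_right[of X 0 0] by simp

lemma bilinear_form_sum_left: "B (sum f S) Y = (\<Sum>x\<in>S. B (f x) Y)"
  by (induction S rule: infinite_finite_induct)
    (simp_all add: bilinear_form_zero_left bilinear_form_add_left)

lemma bilinear_form_sum_right: "B X (sum f S) = (\<Sum>x\<in>S. B X (f x))"
  by (induction S rule: infinite_finite_induct)
    (simp_all add: bilinear_form_zero_right bilinear_form_add_right)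

lemma bilinear_form_expand:
  "B X Y = (\<Sum>i\<in>UNIV. \<Sum>j\<in>UNIV. \<Sum>k\<in>UNIV. \<Sum>l\<in>UNIV.
      X $ i $ j * Y $ k $ l * B (matrix_unit i j) (matrix_unit k l))"
proof -
  have "B X Y = B (\<Sum>i\<in>UNIV. \<Sum>j\<in>UNIV. smult_mat (X $ i $ j) (matrix_unit i j))
                  (\<Sum>k\<in>UNIV. \<Sum>l\<in>UNIV. smult_mat (Y $ k $ l) (matrix_unit k l))"
    by (simp flip: matrix_eq_sum_units)
  also have "\<dots> = (\<Sum>i\<in>UNIV. \<Sum>j\<in>UNIV. X $ i $ j * B (matrix_unit i j)
                  (\<Sum>k\<in>UNIV. \<Sum>l\<in>UNIV. smult_mat (Y $ k $ l) (matrix_unit k l)))"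
    by (simp add: bilinear_form_sum_left bilinear_form_smult_left)
  also have "\<dots> = (\<Sum>i\<in>UNIV. \<Sum>j\<in>UNIV. \<Sum>k\<in>UNIV. \<Sum>l\<in>UNIV.
      X $ i $ j * (Y $ k $ l * B (matrix_unit i j) (matrix_unit k l)))"
    by (simp add: bilinear_form_sum_right bilinear_form_smult_right sum_distrib_left)
  finally show ?thesis
    by (simp add: mult.assoc)
qed

lemma alternating_antisym:
  assumes "alternating B"
  shows "B Y X = - B X Y"
proof -
  have "0 = B (X + Y) (X + Y)"
    using assms by (simp add: alternating_def)
  also have "\<dots> = B X X + B X Y + B Y X + B Y Y"
    by (simp add: bilinear_form_add_left bilinear_form_add_right)
  also have "\<dots> = B X Y + B Y X"
    using assms by (simp add: alternating_def)
  finally show ?thesis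
    by (simp add: eq_neg_iff_add_eq_0 add.commute)
qed

end

lemma pairing_axis: "pairing (axis j 1) (axis k 1) = (if j = k then 1 else (0::'a::comm_ring_1))"
proof -
  have "pairing (axis j 1) (axis k (1::'a)) = (\<Sum>i\<in>UNIV. if i = j then (if j = k then 1 else 0) else 0)"
    unfolding pairing_def by (rule sum.cong) (auto simp: axis_def)
  then show ?thesis by simp
qed

lemma bV_pure_axis:
  "bV_pure (axis i 1) (axis j 1) (axis k 1) (axis l 1) =
     (if j = k then 1 else 0) * (if l = i then 1 else 0)
     + (if j = i then 1 else 0) * (if l = k then 1 else (0::'a::comm_ring_1))"
  by (simp only: bV_pure_def pairing_axis)

section \<open>The diagonal torus\<close>

lemma SL_invariantD:
  "SL_invariant B \<Longrightarrow> det g = 1 \<Longrightarrow> g ** h = mat 1 \<Longrightarrow> B (g ** X ** h) (g ** Y ** h) = B X Y"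
  unfolding SL_invariant_def by blast

definition diag_mat :: "('n \<Rightarrow> 'a) \<Rightarrow> 'a::comm_ring_1^'n^'n" where
  "diag_mat t = (\<chi> r s. if r = s then t r else 0)"

lemma diag_mat_nth [simp]: "diag_mat t $ r $ s = (if r = s then t r else 0)"
  by (simp add: diag_mat_def)

lemma det_diag_mat: "det (diag_mat t) = prod t UNIV"
  by (subst det_diagonal) auto

lemma diag_mat_mult: "diag_mat t ** diag_mat u = diag_mat (\<lambda>m. t m * u m)"
proof -
  have "diag_mat t $ r $ k * diag_mat u $ k $ s = (if k = r then diag_mat (\<lambda>m. t m * u m) $ r $ s else 0)"
    for r s k
    by simp
  then show ?thesis
    unfolding vec_eq_iff matrix_matrix_mult_def by simp
qed

lemma diag_mat_1: "diag_mat (\<lambda>_. 1) = mat 1"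
  by (simp add: vec_eq_iff mat_def)

lemma diag_mat_conj_unit:
  "diag_mat t ** matrix_unit a b ** diag_mat u = smult_mat (t a * u b) (matrix_unit a b)"
  by (auto simp: vec_eq_iff matrix_mult_unit_mult_nth)

lemma SL_invariant_torus_unit:
  fixes B :: "'a::field^'n^'n \<Rightarrow> 'a^'n^'n \<Rightarrow> 'a"
    and t :: "'n \<Rightarrow> 'a"
  assumes bil: "bilinear_form B" and inv: "SL_invariant B"
    and nonzero: "\<And>m. t m \<noteq> 0" and det1: "prod t UNIV = 1"
    and nonvanishing: "B (matrix_unit i j) (matrix_unit k l) \<noteq> 0"
  shows "t i * t k = t j * t l"
proof -
  let ?g = "diag_mat t" and ?h = "diag_mat (\<lambda>m. inverse (t m))"
  have "?g ** ?h = mat 1"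
    using nonzero by (simp add: diag_mat_mult diag_mat_1)
  then have "B (matrix_unit i j) (matrix_unit k l) = B (?g ** matrix_unit i j ** ?h) (?g ** matrix_unit k l ** ?h)"
    using SL_invariantD[OF inv] det1 by (simp add: det_diag_mat)
  also have "\<dots> = (t i * inverse (t j)) * (t k * inverse (t l)) * B (matrix_unit i j) (matrix_unit k l)"
    by (simp add: diag_mat_conj_unit bilinear_form_smult_left[OF bil] bilinear_form_smult_right[OF bil])
  finally have "t i * inverse (t j) * (t k * inverse (t l)) = 1"
    using nonvanishing by simp
  then show ?thesis
    using nonzero by (simp add: field_simps)
qed

definition coroot :: "'n \<Rightarrow> 'n \<Rightarrow> 'n \<Rightarrow> int" where
  "coroot p q m = of_bool (m = p) - of_bool (m = q)"

lemma sum_coroot: "sum (coroot p q) (UNIV :: 'n::finite set) = 0"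
  by (simp add: coroot_def sum_subtractf)

lemma abs_coroot_le_1: "\<bar>coroot p q m\<bar> \<le> 1"
  by (simp add: coroot_def)

lemma prod_power_int:
  fixes x :: "'a::field"
  shows "x \<noteq> 0 \<Longrightarrow> (\<Prod>m\<in>A. x powi f m) = x powi (\<Sum>m\<in>A. f m)"
  by (induction A rule: infinite_finite_induct) (simp_all add: power_int_add)

lemma power_int_eq_imp_eq:
  fixes s :: "'a::field"
  assumes "s \<noteq> 0" and no_root: "\<And>m. 0 < m \<Longrightarrow> m \<le> N \<Longrightarrow> s ^ m \<noteq> 1"
    and "\<bar>a - b\<bar> \<le> int N" and "s powi a = s powi b"
  shows "a = b"
proof -
  have not_one: "s powi d \<noteq> 1" if "0 < d" "d \<le> int N" for d
    using no_root[of "nat d"] that by (simp add: power_int_nonneg_exp)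
  have "s powi (a - b) = 1" "s powi (b - a) = 1"
    using assms by (simp_all add: power_int_diff)
  then show ?thesis
    using not_one[of "a - b"] not_one[of "b - a"] assms(3) by linarith
qed

lemma SL_invariant_coroot_weight:
  fixes B :: "'a::field^'n^'n \<Rightarrow> 'a^'n^'n \<Rightarrow> 'a" and s :: 'a
  assumes bil: "bilinear_form B" and inv: "SL_invariant B" and "s \<noteq> 0"
    and nonvanishing: "B (matrix_unit i j) (matrix_unit k l) \<noteq> 0"
  shows "s powi (coroot p q i + coroot p q k) = s powi (coroot p q j + coroot p q l)"
proof -
  have "prod (\<lambda>m. s powi coroot p q m) UNIV = 1"
    using \<open>s \<noteq> 0\<close> by (simp add: prod_power_int sum_coroot)
  then have "s powi coroot p q i * s powi coroot p q k = s powi coroot p q j * s powi coroot p q l"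
    using SL_invariant_torus_unit[OF bil inv _ _ nonvanishing, of "\<lambda>m. s powi coroot p q m"] \<open>s \<noteq> 0\<close>
    by simp
  then show ?thesis
    using \<open>s \<noteq> 0\<close> by (simp add: power_int_add)
qed

lemma coroot_sums_eq_imp:
  assumes "\<And>p q. coroot p q i + coroot p q k = coroot p q j + coroot p q l"
  shows "(i = j \<and> k = l) \<or> (i = l \<and> k = j)"
proof (cases "i = j")
  case True
  then show ?thesis
    using assms[of k l] by (cases "k = l") (auto simp: coroot_def)
next
  case False
  then show ?thesis
    using assms[of i j] False by (auto simp: coroot_def of_bool_def split: if_splits)
qed

lemma exists_not_root_of_unity:
  assumes "infinite (UNIV :: 'a::field set)"
  shows "\<exists>s::'a. s \<noteq> 0 \<and> (\<forall>m. 0 < m \<and> m \<le> N \<longrightarrow> s ^ m \<noteq> 1)"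
proof -
  have "finite {x::'a. x ^ m = 1}" if "0 < m" for m
  proof -
    have "coeff (monom 1 m - 1 :: 'a poly) m = 1"
      using that by simp
    then have "monom 1 m - 1 \<noteq> (0 :: 'a poly)"
      by (metis coeff_0 zero_neq_one)
    then show ?thesis
      using poly_roots_finite[of "monom 1 m - 1"] by (simp add: poly_monom)
  qed
  then have "finite (insert 0 (\<Union>m\<in>{1..N}. {x::'a. x ^ m = 1}))"
    by auto
  then obtain s where "s \<notin> insert 0 (\<Union>m\<in>{1..N}. {x::'a. x ^ m = 1})"
    using ex_new_if_finite[OF assms] by blast
  then show ?thesis
    by auto
qed

lemma alg_closed_field_infinite: "infinite (UNIV :: 'a::alg_closed_field set)"
proof
  assume fin: "finite (UNIV :: 'a set)"
  define q :: "'a poly" where "q = (\<Prod>a\<in>UNIV. [:-a, 1:])"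
  have "degree q = card (UNIV :: 'a set)"
    by (simp add: q_def degree_prod_eq_sum_degree)
  then have "degree q > 0"
    using fin by (simp add: finite_UNIV_card_ge_0)
  then have "degree (1 + q) > 0"
    by (simp add: degree_add_eq_right)
  then obtain x where "poly (1 + q) x = 0"
    using alg_closed_imp_poly_has_root by blast
  moreover have "poly q x = 0"
    using fin by (simp add: q_def poly_prod)
  ultimately show False
    by simp
qed

lemma SL_invariant_unit_eq_zero:
  fixes B :: "'a::field^'n^'n \<Rightarrow> 'a^'n^'n \<Rightarrow> 'a"
  assumes "infinite (UNIV :: 'a set)" and bil: "bilinear_form B" and inv: "SL_invariant B"
    and "\<not> ((i = j \<and> k = l) \<or> (i = l \<and> k = j))"
  shows "B (matrix_unit i j) (matrix_unit k l) = 0"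
proof (rule ccontr)
  assume nonvanishing: "B (matrix_unit i j) (matrix_unit k l) \<noteq> 0"
  obtain s :: 'a where "s \<noteq> 0" and no_root: "\<And>m. 0 < m \<Longrightarrow> m \<le> 4 \<Longrightarrow> s ^ m \<noteq> 1"
    using exists_not_root_of_unity[OF assms(1), of 4] by blast
  have "coroot p q i + coroot p q k = coroot p q j + coroot p q l" for p q
  proof (rule power_int_eq_imp_eq[OF \<open>s \<noteq> 0\<close> no_root])
    show "\<bar>coroot p q i + coroot p q k - (coroot p q j + coroot p q l)\<bar> \<le> int 4"
      using abs_coroot_le_1[of p q i] abs_coroot_le_1[of p q j] abs_coroot_le_1[of p q k]
        abs_coroot_le_1[of p q l]
      by linarith
    show "s powi (coroot p q i + coroot p q k) = s powi (coroot p q j + coroot p q l)"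
      by (rule SL_invariant_coroot_weight[OF bil inv \<open>s \<noteq> 0\<close> nonvanishing])
  qed
  then show False
    using coroot_sums_eq_imp assms(4) by metis
qed

section \<open>Transvections\<close>

definition transvection :: "'n \<Rightarrow> 'n \<Rightarrow> 'a \<Rightarrow> 'a::comm_ring_1^'n^'n" where
  "transvection a b c = (\<chi> r s. (if r = s then 1 else 0) + (if r = a \<and> s = b then c else 0))"

lemma transvection_nth [simp]:
  "transvection a b c $ r $ s = (if r = s then 1 else 0) + (if r = a \<and> s = b then c else 0)"
  by (simp add: transvection_def)

lemma det_transvection:
  assumes "a \<noteq> b"
  shows "det (transvection a b c :: 'a::comm_ring_1^'n^'n) = 1"
proof -
  have "transvection a b c = (\<chi> k. if k = a then row a (mat 1) + c *s row b (mat 1) else row k (mat 1))"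
    by (simp add: vec_eq_iff row_def mat_def)
  then show ?thesis
    using det_row_operation[OF assms, of "mat 1" c] by simp
qed

lemma transvection_mult_neg:
  assumes "a \<noteq> b"
  shows "transvection a b c ** transvection a b (- c) = (mat 1 :: 'a::comm_ring_1^'n^'n)"
proof -
  let ?T = "transvection a b c :: 'a^'n^'n" and ?S = "transvection a b (- c) :: 'a^'n^'n"
  have "(\<Sum>k\<in>UNIV. ?T $ r $ k * ?S $ k $ s) =
      (\<Sum>k\<in>UNIV. (if k = r then ?S $ r $ s else 0) + (if k = b then if r = a then c * ?S $ b $ s else 0 else 0))"
    for r s
    by (rule sum.cong) (auto simp del: transvection_nth simp add: transvection_nth[of a b c] distrib_right)
  also have "\<dots> r s = mat 1 $ r $ s" for r s
    using assms by (auto simp: sum.distrib mat_def)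
  finally show ?thesis
    unfolding vec_eq_iff matrix_matrix_mult_def by simp
qed

lemma transvection_conj_unit:
  assumes "a \<noteq> b"
  shows "transvection a b 1 ** matrix_unit x y ** transvection a b (- 1) =
    matrix_unit x y + (if x = b then matrix_unit a y else 0) - (if y = a then matrix_unit x b else 0)
      - (if x = b \<and> y = a then matrix_unit a b else (0 :: 'a::comm_ring_1^'n^'n))"
  using assms by (auto simp: vec_eq_iff matrix_mult_unit_mult_nth)

lemma SL_invariant_transvection:
  assumes "SL_invariant B" and "a \<noteq> b"
  shows "B (transvection a b 1 ** X ** transvection a b (- 1))
           (transvection a b 1 ** Y ** transvection a b (- 1)) = B X Y"
  using SL_invariantD[OF assms(1) det_transvection transvection_mult_neg] assms(2) by blast

context
begin

private abbreviation E :: "'n \<Rightarrow> 'n \<Rightarrow> 'a::comm_ring_1^'n^'n" where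
  "E \<equiv> matrix_unit"

context
  fixes B :: "'a::field^'n^'n \<Rightarrow> 'a^'n^'n \<Rightarrow> 'a"
  assumes infinite: "infinite (UNIV :: 'a set)"
    and bil: "bilinear_form B" and inv: "SL_invariant B"
begin

private lemma unit_vanish:
  "\<not> ((i = j \<and> k = l) \<or> (i = l \<and> k = j)) \<Longrightarrow> B (E i j) (E k l) = 0"
  by (rule SL_invariant_unit_eq_zero[OF infinite bil inv])

lemma SL_invariant_unit_swap:
  assumes alt: "alternating B" and "a \<noteq> b"
  shows "B (E b a) (E a b) = - B (E a a) (E b b)"
proof -
  have "B (E b a) (E b b) = B (E b a + E a a - E b b - E a b) (E b b + E a b)"
    using SL_invariant_transvection[OF inv \<open>a \<noteq> b\<close>, of "E b a" "E b b"] \<open>a \<noteq> b\<close>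
    by (simp add: transvection_conj_unit)
  also have "\<dots> = B (E b a) (E b b) + B (E b a) (E a b) + B (E a a) (E b b) - B (E b b) (E b b)"
    using \<open>a \<noteq> b\<close>
    by (simp add: bilinear_form_add_left[OF bil] bilinear_form_add_right[OF bil]
        bilinear_form_diff_left[OF bil] unit_vanish)
  finally show ?thesis
    using alt by (simp add: alternating_def eq_neg_iff_add_eq_0)
qed

lemma SL_invariant_unit_diag_eq:
  assumes "a \<noteq> b" "a \<noteq> c" "b \<noteq> c"
  shows "B (E a a) (E b b) = B (E a a) (E c c)"
proof -
  have "B (E a a) (E c b) = B (E a a) (E c b + E b b - E c c - E b c)"
    using SL_invariant_transvection[OF inv \<open>b \<noteq> c\<close>, of "E a a" "E c b"] assms
    by (simp add: transvection_conj_unit)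
  also have "\<dots> = B (E a a) (E c b) + B (E a a) (E b b) - B (E a a) (E c c)"
    using assms by (simp add: bilinear_form_add_right[OF bil] bilinear_form_diff_right[OF bil] unit_vanish)
  finally show ?thesis
    by simp
qed

end

section \<open>Characteristic 2\<close>

context
  fixes B :: "'a::field^'n^'n \<Rightarrow> 'a^'n^'n \<Rightarrow> 'a"
  assumes char2: "CHAR('a) = 2" and infinite: "infinite (UNIV :: 'a set)"
    and bil: "bilinear_form B" and alt: "alternating B" and inv: "SL_invariant B"
begin

lemma CHAR_2_SL_invariant_unit_diag_const:
  assumes "a \<noteq> b" "p \<noteq> q"
  shows "B (E a a) (E b b) = B (E p p) (E q q)"
proof -
  have symm: "B (E a a) (E b b) = B (E b b) (E a a)" for a b
    using alternating_antisym[OF bil alt] uminus_CHAR_2[OF char2] by metis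
  have row_const: "B (E a a) (E b b) = B (E a a) (E b' b')" if "a \<noteq> b" "a \<noteq> b'" for a b b'
    using SL_invariant_unit_diag_eq[OF infinite bil inv that] by (cases "b = b'") auto
  show ?thesis
  proof (cases "a = p")
    case True
    then show ?thesis
      using row_const assms by metis
  next
    case False
    then have "B (E a a) (E b b) = B (E p p) (E a a)"
      using row_const[of a b p] symm[of a p] assms by simp
    also have "\<dots> = B (E p p) (E q q)"
      using row_const[of p a q] False assms by simp
    finally show ?thesis .
  qed
qed

lemma CHAR_2_SL_invariant_unit_eq:
  assumes "p \<noteq> q"
  shows "B (E i j) (E k l) = B (E p p) (E q q) * bV_pure (axis i 1) (axis j 1) (axis k 1) (axis l 1)"
proof -
  have two: "(2::'a) = 0"
    using of_nat_CHAR[where 'a='a] char2 by simp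
  consider (diag) "i = j" "k = l" | (swap) "i = l" "k = j" "i \<noteq> j"
    | (other) "\<not> ((i = j \<and> k = l) \<or> (i = l \<and> k = j))"
    by blast
  then show ?thesis
  proof cases
    case diag
    show ?thesis
    proof (cases "i = k")
      case True
      then show ?thesis
        using diag alt two by (simp add: alternating_def bV_pure_axis)
    next
      case False
      then show ?thesis
        using diag CHAR_2_SL_invariant_unit_diag_const[OF False assms] by (simp add: bV_pure_axis)
    qed
  next
    case swap
    then have "B (E i j) (E k l) = - B (E j j) (E i i)"
      using SL_invariant_unit_swap[OF infinite bil inv alt, of j i] by simp
    also have "\<dots> = B (E j j) (E i i)"
      by (rule uminus_CHAR_2[OF char2])
    also have "\<dots> = B (E p p) (E q q)"
      using swap assms by (intro CHAR_2_SL_invariant_unit_diag_const) auto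
    finally show ?thesis
      using swap by (simp add: bV_pure_axis)
  next
    case other
    then show ?thesis
      using SL_invariant_unit_eq_zero[OF infinite bil inv other] by (auto simp: bV_pure_axis)
  qed
qed

end

end

theorem lemma8p2:
  fixes B :: "'a::alg_closed_field^'n^'n \<Rightarrow> 'a^'n^'n \<Rightarrow> 'a"
  assumes "CHAR('a) = 2"
    and "CARD('n) \<ge> 2"
    and "bilinear_form B"
    and "alternating B"
    and "SL_invariant B"
  shows "\<exists>c::'a. \<forall>X Y. B X Y = c * bV X Y"
proof -
  obtain p q :: 'n where "p \<noteq> q"
    using assms(2) card_le_Suc0_iff_eq[of "UNIV :: 'n set"] by auto
  define c where "c = B (matrix_unit p p) (matrix_unit q q)"
  have "B (matrix_unit i j) (matrix_unit k l) = c * bV_pure (axis i 1) (axis j 1) (axis k 1) (axis l 1)"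
    for i j k l
    unfolding c_def
    using CHAR_2_SL_invariant_unit_eq[OF assms(1) alg_closed_field_infinite assms(3-5) \<open>p \<noteq> q\<close>] .
  then have "B X Y = c * bV X Y" for X Y
    unfolding bilinear_form_expand[OF assms(3), of X Y] bV_def
    by (simp add: sum_distrib_left mult_ac)
  then show ?thesis
    by blast
qed

end
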